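(* Let $M$ be a matroid on a finite set $E$ with $r(M)>0$. Then $\cup F(M)=\cup\mathcal{B}(M)$.
   Context: For a matroid $M$: $\mathcal{I}(M)$ its independent sets, $\mathcal{B}(M)$ its bases, $r(M)$ the size of a base, $r(X)$ the rank of $X\subseteq E$. For a set family $S$, $\cup S=\bigcup_{X\in S}X$. $s(M)=\{A\in\mathcal{I}(M): |A|=r(M)-1\}$; $K_M(X)=\{a\in E: r(X\cup\{a\})=r(X)+1\}$; $F(M)=\{K_M(X): X\in s(M)\}$. *)

theory Defs
  imports Main
begin

definition matroid :: "'a set \<Rightarrow> 'a set set \<Rightarrow> bool" where
  "matroid E \<I> \<longleftrightarrow>
     finite E \<and> (\<forall>X\<in>\<I>. X \<subseteq> E) \<and> {} \<in> \<I> \<and>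
     (\<forall>X Y. X \<in> \<I> \<and> Y \<subseteq> X \<longrightarrow> Y \<in> \<I>) \<and>
     (\<forall>X Y. X \<in> \<I> \<and> Y \<in> \<I> \<and> card X < card Y \<longrightarrow> (\<exists>y\<in>Y - X. insert y X \<in> \<I>))"

definition bases :: "'a set set \<Rightarrow> 'a set set" where
  "bases \<I> = {B \<in> \<I>. \<forall>X\<in>\<I>. B \<subseteq> X \<longrightarrow> X = B}"

definition rank_of :: "'a set set \<Rightarrow> 'a set \<Rightarrow> nat" where
  "rank_of \<I> X = Max (card ` {Y \<in> \<I>. Y \<subseteq> X})"

definition mrank :: "'a set \<Rightarrow> 'a set set \<Rightarrow> nat" where
  "mrank E \<I> = rank_of \<I> E"

definition s_sets :: "'a set \<Rightarrow> 'a set set \<Rightarrow> 'a set set" where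
  "s_sets E \<I> = {A \<in> \<I>. card A = mrank E \<I> - 1}"

definition K_set :: "'a set \<Rightarrow> 'a set set \<Rightarrow> 'a set \<Rightarrow> 'a set" where
  "K_set E \<I> X = {a \<in> E. rank_of \<I> (insert a X) = rank_of \<I> X + 1}"

definition F_fam :: "'a set \<Rightarrow> 'a set set \<Rightarrow> 'a set set" where
  "F_fam E \<I> = K_set E \<I> ` s_sets E \<I>"

end

theory Submission
  imports Defs
begin

text \<open>For an independent set X of size r(M) - 1, an element a raises the rank of X exactly
  when X + a is independent, i.e. a base. Hence the sets K(X) are the elements completing X to a
  base, and every element of a base B lies in K(B - a).\<close>

lemma matroid_indep_subset_ground: "matroid E I \<Longrightarrow> X \<in> I \<Longrightarrow> X \<subseteq> E"
  unfolding matroid_def by blast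

lemma matroid_indep_finite: "matroid E I \<Longrightarrow> X \<in> I \<Longrightarrow> finite X"
  unfolding matroid_def by (meson finite_subset)

lemma matroid_indep_subset: "matroid E I \<Longrightarrow> X \<in> I \<Longrightarrow> Y \<subseteq> X \<Longrightarrow> Y \<in> I"
  unfolding matroid_def by blast

lemma matroid_augment:
  "matroid E I \<Longrightarrow> X \<in> I \<Longrightarrow> Y \<in> I \<Longrightarrow> card X < card Y \<Longrightarrow> \<exists>y\<in>Y - X. insert y X \<in> I"
  unfolding matroid_def by blast

lemma finite_indep_subsets:
  assumes "matroid E I"
  shows "finite {Y \<in> I. Y \<subseteq> S}"
proof (rule finite_subset)
  show "{Y \<in> I. Y \<subseteq> S} \<subseteq> Pow E"
    using matroid_indep_subset_ground[OF assms] by blast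
  show "finite (Pow E)"
    using assms unfolding matroid_def by simp
qed

lemma card_le_rank_of:
  assumes "matroid E I" "Y \<in> I" "Y \<subseteq> S"
  shows "card Y \<le> rank_of I S"
  unfolding rank_of_def using finite_indep_subsets[OF assms(1)] assms(2,3)
  by (intro Max_ge) auto

lemma rank_of_attained:
  assumes "matroid E I"
  obtains Y where "Y \<in> I" "Y \<subseteq> S" "card Y = rank_of I S"
proof -
  have "{} \<in> {Y \<in> I. Y \<subseteq> S}"
    using assms unfolding matroid_def by simp
  then have "rank_of I S \<in> card ` {Y \<in> I. Y \<subseteq> S}"
    unfolding rank_of_def using finite_indep_subsets[OF assms] by (intro Max_in) auto
  then show ?thesis
    using that by force
qed

lemma rank_of_indep:
  assumes "matroid E I" "X \<in> I"
  shows "rank_of I X = card X"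
proof (rule antisym)
  obtain Y where "Y \<subseteq> X" "card Y = rank_of I X"
    using rank_of_attained[OF assms(1)] .
  then show "rank_of I X \<le> card X"
    using matroid_indep_finite[OF assms] by (metis card_mono)
  show "card X \<le> rank_of I X"
    using card_le_rank_of[OF assms] by simp
qed

lemma rank_of_insert_indep_iff:
  assumes M: "matroid E I" and X: "X \<in> I"
  shows "rank_of I (insert a X) = rank_of I X + 1 \<longleftrightarrow> a \<notin> X \<and> insert a X \<in> I"
proof
  have fin: "finite X"
    using matroid_indep_finite[OF M X] .
  assume rank: "rank_of I (insert a X) = rank_of I X + 1"
  obtain Y where Y: "Y \<in> I" "Y \<subseteq> insert a X" "card Y = rank_of I (insert a X)"
    by (rule rank_of_attained[OF M])
  have card_Y: "card Y = card X + 1"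
    using Y(3) rank rank_of_indep[OF M X] by simp
  have "\<not> Y \<subseteq> X"
  proof
    assume "Y \<subseteq> X"
    then have "card Y \<le> card X"
      using fin by (rule card_mono[rotated])
    then show False
      using card_Y by simp
  qed
  then have "a \<notin> X"
    using Y(2) by blast
  moreover have "Y = insert a X"
    using Y(2) card_Y fin \<open>a \<notin> X\<close> by (intro card_seteq) simp_all
  ultimately show "a \<notin> X \<and> insert a X \<in> I"
    using Y(1) by simp
next
  assume "a \<notin> X \<and> insert a X \<in> I"
  then show "rank_of I (insert a X) = rank_of I X + 1"
    using rank_of_indep[OF M] X matroid_indep_finite[OF M X] by simp
qed

lemma base_card_eq_mrank:
  assumes M: "matroid E I" and B: "B \<in> bases I"
  shows "card B = mrank E I"
proof -
  have BI: "B \<in> I" and maximal: "\<And>X. X \<in> I \<Longrightarrow> B \<subseteq> X \<Longrightarrow> X = B"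
    using B unfolding bases_def by auto
  obtain Y where Y: "Y \<in> I" "card Y = mrank E I"
    using rank_of_attained[OF M, of E] unfolding mrank_def by metis
  have "card B \<le> mrank E I"
    using card_le_rank_of[OF M BI matroid_indep_subset_ground[OF M BI]] unfolding mrank_def .
  moreover have "\<not> card B < card Y"
    using matroid_augment[OF M BI Y(1)] maximal by blast
  ultimately show ?thesis
    using Y(2) by simp
qed

lemma indep_card_mrank_imp_base:
  assumes M: "matroid E I" and X: "X \<in> I" "card X = mrank E I"
  shows "X \<in> bases I"
  unfolding bases_def
proof (intro CollectI conjI ballI impI)
  fix Z assume Z: "Z \<in> I" "X \<subseteq> Z"
  have "card Z \<le> card X"
    using card_le_rank_of[OF M Z(1) matroid_indep_subset_ground[OF M Z(1)]] X(2)
    unfolding mrank_def by simp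
  then show "Z = X"
    using Z(2) matroid_indep_finite[OF M Z(1)] by (metis card_seteq)
qed (use X in simp)

theorem proposition3:
  fixes E :: "'a set" and \<I> :: "'a set set"
  assumes "matroid E \<I>" and "mrank E \<I> > 0"
  shows "\<Union> (F_fam E \<I>) = \<Union> (bases \<I>)"
proof
  show "\<Union> (F_fam E \<I>) \<subseteq> \<Union> (bases \<I>)"
  proof
    fix a assume "a \<in> \<Union> (F_fam E \<I>)"
    then obtain X where X: "X \<in> \<I>" "card X = mrank E \<I> - 1"
      and "rank_of \<I> (insert a X) = rank_of \<I> X + 1"
      unfolding F_fam_def s_sets_def K_set_def by auto
    then have "a \<notin> X" "insert a X \<in> \<I>"
      using rank_of_insert_indep_iff[OF assms(1)] by blast+
    moreover have "card (insert a X) = mrank E \<I>"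
      using X \<open>a \<notin> X\<close> matroid_indep_finite[OF assms(1)] assms(2) by simp
    ultimately show "a \<in> \<Union> (bases \<I>)"
      using indep_card_mrank_imp_base[OF assms(1)] by blast
  qed
next
  show "\<Union> (bases \<I>) \<subseteq> \<Union> (F_fam E \<I>)"
  proof
    fix a assume "a \<in> \<Union> (bases \<I>)"
    then obtain B where B: "B \<in> bases \<I>" "a \<in> B" by blast
    then have BI: "B \<in> \<I>" unfolding bases_def by simp
    define X where "X = B - {a}"
    have "X \<in> \<I>" and "insert a X = B" and "a \<notin> X"
      using matroid_indep_subset[OF assms(1) BI] B(2) unfolding X_def by auto
    then have "a \<in> K_set E \<I> X"
      using rank_of_insert_indep_iff[OF assms(1)] BI matroid_indep_subset_ground[OF assms(1) BI] B(2)
      unfolding K_set_def by auto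
    moreover have "X \<in> s_sets E \<I>"
      using \<open>X \<in> \<I>\<close> base_card_eq_mrank[OF assms(1) B(1)] B(2) matroid_indep_finite[OF assms(1) BI]
      unfolding s_sets_def X_def by simp
    ultimately show "a \<in> \<Union> (F_fam E \<I>)"
      unfolding F_fam_def by blast
  qed
qed

end
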